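(* Run multi-agent dual policy iteration (defined in the context) with $K\ge1$, arbitrary agent orderings, and the tie-breaking convention. Then the joint safety policies and the joint task policies are eventually constant, equal to some $\pi_h^*$ and $\pi^*$ respectively. Let $S_{\rm c}^*=S_{\rm c}^{\pi_h^*}$, and assume $S_{\rm c}^*\neq\varnothing$. Then: (a) $\pi_h^*$ is a Nash equilibrium for the safety value function: $V_h^{(\pi_{h,i},\pi^*_{h,-i})}(x)\le V_h^{\pi_h^*}(x)$ for all $i$, all individual policies $\pi_{h,i}$, and all $x\in\mathcal X$; (b) $\pi^*(x)=\pi_h^*(x)$ for all $x\notin S_{\rm c}^*$, and $V_h^{\pi_h^*}(f(x,\pi^*(x)))\ge0$ for all $x\in S_{\rm c}^*$; (c) (generalized Nash equilibrium in the induced game) for every $i\in\mathcal N$ and every individual policy $\pi_i:\mathcal X\to\mathcal U_i$ such that $V_h^{\pi_h^*}\big(f(y,(\pi_i(y),\pi^*_{-i}(y)))\big)\ge0$ for all $y\in S_{\rm c}^*$, one has $V^{(\pi_i,\pi^*_{-i})}(x)\le V^{\pi^*}(x)$ for all $x\in S_{\rm c}^*$; (d) (generalized Nash equilibrium for the two-fold problem) for every initial distribution $d$ on $\mathcal X$, every $i\in\mathcal N$, and every individual policy $\pi_i$ satisfying the condition in (c), $J(\pi_i,\pi^*_{-i})\le J(\pi^* )$. Here $$J(\pi)=\mathbb E_{x_0\sim d}\big[V^{\pi}(x_0)\mathbb 1_{S_{\rm c}^*}(x_0)+V_h^{\pi}(x_0)\mathbb 1_{\mathcal X\setminus S_{\rm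 c}^*}(x_0)\big],$$ and $\pi^*$ itself satisfies the constraint $V_h^{\pi_h^*}(f(x,\pi^*(x)))\ge0$ for all $x\in S_{\rm c}^*$.
   Context: Setting. Let $\mathcal N=\{1,\dots,n\}$ be a finite set of agents, $\mathcal X$ a finite state space, $\mathcal U_i$ a finite action set for agent $i$, $\mathcal U=\prod_{i=1}^n\mathcal U_i$ the joint action space, $f:\mathcal X\times\mathcal U\to\mathcal X$ the deterministic dynamics, $r:\mathcal X\times\mathcal U\to\mathbb R$ a reward, $h:\mathcal X\to\mathbb R$ a constraint function, and $\gamma,\gamma_h\in(0,1)$ discount factors. An individual policy of agent $i$ is a map $\pi_i:\mathcal X\to\mathcal U_i$. A joint policy is $\pi=(\pi_1,\dots,\pi_n)$, with $\pi(x)=(\pi_1(x),\dots,\pi_n(x))$. For a joint action $u$ and an agent $i$, $(u_i',u_{-i})$ denotes $u$ with its $i$-th component replaced by $u_i'$. The notation $(\pi_i',\pi_{-i})$ is used in the same way for policies. Safety value function. For a joint policy $\pi$, set $V_h^{\pi}(x)=\min_{t\in\mathbb N}\gamma_h^{t+1}h(x_t)$, where $x_0=x$ and $x_{t+1}=f(x_t,\pi(x_t))$. Value function. Along the same trajectory, set $V^{\pi}(x)=\sum_{t\ge0}\gamma^t r(x_t,\pi(x_t))$. Controlled invariant set. $S_{\rm c}^{\pi}=\{x: V_h^{\pi}(x)\ge0\}$. Invariant action set. For a joint policy $\pi_h$, a state $x$, and actions $u_{-i}$ of the agents other than $i$, set $\mathcal U_i^{\pi_h}(x,u_{-i})=\{u_i\in\mathcal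 U_i: V_h^{\pi_h}(f(x,(u_i,u_{-i})))\ge0\}$. Safety update step. Given the current joint safety policy $\pi_h$ and an ordering $i_1,\dots,i_n$ of $\mathcal N$: for each $x$ and $j=1,\dots,n$ in turn, replace $\pi_{h,i_j}(x)$ by an element of $\arg\max_{v\in\mathcal U_{i_j}}V_h^{\pi_h^{\rm old}}(f(x,w))$. Here $V_h^{\pi_h^{\rm old}}$ is computed for the policy before this step, and $w$ has component $i_j$ equal to $v$, components of earlier agents equal to their already-updated actions, and components of later agents equal to their old actions. Multi-agent dual policy iteration. Start from an initial joint safety policy $\pi_h$, an arbitrary initial joint task policy $\pi$, and $S_{\rm c}=\varnothing$. Each outer iteration consists of: (1) apply the safety update step $K$ times to $\pi_h$; (2) compute $V^{\pi}$ for the current task policy $\pi$; (3) for every $x\in\mathcal X\setminus S_{\rm c}$, set $\pi(x)\leftarrow\pi_h(x)$; (4) set $S_{\rm c}^{\rm new}=S_{\rm c}^{\pi_h}$; (5) choose an ordering $i_1,\dots,i_n$. For each $x\in S_{\rm c}^{\rm new}$ and $j=1,\dots,n$ in turn, set $$\pi^{\rm new}_{i_j}(x)\in\arg\max_{v\in\mathcal U_{i_j}^{\pi_h}(x,w^{(j)}_{-i_j})}\Big\{r\big(x,(v,w^{(j)}_{-i_j})\big)+\gamma V^{\pi}\big(f(x,(v,w^{(j)}_{-i_j}))\big)\Big\},$$ where $w^{(j)}_{-i_j}$ gives agents $i_l$ with $l<j$ their new actions $\pi^{\rm new}_{i_l}(x)$ and agents $i_l$ with $l>j$ their actions under $\pi$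 after step (3). For $x\notin S_{\rm c}^{\rm new}$, $\pi^{\rm new}(x)$ is $\pi(x)$ after step (3). Then set $\pi\leftarrow\pi^{\rm new}$; (6) set $S_{\rm c}\leftarrow S_{\rm c}^{\rm new}$. Tie-breaking convention. In every argmax, if the agent's current action is a maximizer, it is selected. Otherwise, a maximizer is selected by a fixed deterministic rule. *)

theory Defs
  imports "HOL-Probability.Probability"
begin

text \<open>States 'x, agents 'i (both finite types), actions 'a; agent i's action set is U i.\<close>

definition traj :: "('x \<Rightarrow> ('i \<Rightarrow> 'a) \<Rightarrow> 'x) \<Rightarrow> ('x \<Rightarrow> 'i \<Rightarrow> 'a) \<Rightarrow> 'x \<Rightarrow> nat \<Rightarrow> 'x" where
  "traj f \<pi> x t = ((\<lambda>y. f y (\<pi> y)) ^^ t) x"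

text \<open>Safety value: min over t of gamma_h^(t+1) h(x_t) (infimum; it need not be attained).\<close>
definition safety_value :: "real \<Rightarrow> ('x \<Rightarrow> real) \<Rightarrow> ('x \<Rightarrow> ('i \<Rightarrow> 'a) \<Rightarrow> 'x)
    \<Rightarrow> ('x \<Rightarrow> 'i \<Rightarrow> 'a) \<Rightarrow> 'x \<Rightarrow> real" where
  "safety_value \<gamma>h h f \<pi> x = (INF t. \<gamma>h ^ Suc t * h (traj f \<pi> x t))"

definition value_fn :: "real \<Rightarrow> ('x \<Rightarrow> ('i \<Rightarrow> 'a) \<Rightarrow> real) \<Rightarrow> ('x \<Rightarrow> ('i \<Rightarrow> 'a) \<Rightarrow> 'x)
    \<Rightarrow> ('x \<Rightarrow> 'i \<Rightarrow> 'a) \<Rightarrow> 'x \<Rightarrow> real" where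
  "value_fn \<gamma> r f \<pi> x = (\<Sum>t. \<gamma> ^ t * r (traj f \<pi> x t) (\<pi> (traj f \<pi> x t)))"

definition inv_set :: "real \<Rightarrow> ('x \<Rightarrow> real) \<Rightarrow> ('x \<Rightarrow> ('i \<Rightarrow> 'a) \<Rightarrow> 'x)
    \<Rightarrow> ('x \<Rightarrow> 'i \<Rightarrow> 'a) \<Rightarrow> 'x set" where
  "inv_set \<gamma>h h f \<pi> = {x. safety_value \<gamma>h h f \<pi> x \<ge> 0}"

definition deviate :: "('x \<Rightarrow> 'i \<Rightarrow> 'a) \<Rightarrow> 'i \<Rightarrow> ('x \<Rightarrow> 'a) \<Rightarrow> ('x \<Rightarrow> 'i \<Rightarrow> 'a)" where
  "deviate \<pi> i \<pi>i = (\<lambda>x. (\<pi> x)(i := \<pi>i x))"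

definition is_tb_max :: "'a set \<Rightarrow> ('a \<Rightarrow> real) \<Rightarrow> 'a \<Rightarrow> 'a \<Rightarrow> bool" where
  "is_tb_max A \<phi> cur v \<longleftrightarrow> v \<in> A \<and> (\<forall>v'\<in>A. \<phi> v' \<le> \<phi> v)
     \<and> ((cur \<in> A \<and> (\<forall>v'\<in>A. \<phi> v' \<le> \<phi> cur)) \<longrightarrow> v = cur)"

text \<open>Sequential (agent-by-agent) update of a joint action w along an ordering.
  C i w is the admissible set of agent i given the others' actions in w; g is the objective.\<close>
fun seq_update :: "('i \<Rightarrow> ('i \<Rightarrow> 'a) \<Rightarrow> 'a set) \<Rightarrow> (('i \<Rightarrow> 'a) \<Rightarrow> real) \<Rightarrow> 'i list
    \<Rightarrow> ('i \<Rightarrow> 'a) \<Rightarrow> ('i \<Rightarrow> 'a) \<Rightarrow> bool" where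
  "seq_update C g [] w w' \<longleftrightarrow> w' = w"
| "seq_update C g (i # is) w w' \<longleftrightarrow>
     (\<exists>v. is_tb_max (C i w) (\<lambda>v. g (w(i := v))) (w i) v \<and> seq_update C g is (w(i := v)) w')"

definition is_ordering :: "'i list \<Rightarrow> bool" where
  "is_ordering os \<longleftrightarrow> distinct os \<and> set os = UNIV"

definition safety_step :: "('i \<Rightarrow> 'a set) \<Rightarrow> real \<Rightarrow> ('x \<Rightarrow> real) \<Rightarrow> ('x \<Rightarrow> ('i \<Rightarrow> 'a) \<Rightarrow> 'x)
    \<Rightarrow> 'i list \<Rightarrow> ('x \<Rightarrow> 'i \<Rightarrow> 'a) \<Rightarrow> ('x \<Rightarrow> 'i \<Rightarrow> 'a) \<Rightarrow> bool" where
  "safety_step U \<gamma>h h f os p q \<longleftrightarrow>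
     (\<forall>x. seq_update (\<lambda>i w. U i) (\<lambda>u. safety_value \<gamma>h h f p (f x u)) os (p x) (q x))"

text \<open>Step (5): ph is the current safety policy, pold the task policy of step (2)
  (used for V^pi), pmid the task policy after step (3), q the new task policy.\<close>
definition task_update :: "('i \<Rightarrow> 'a set) \<Rightarrow> real \<Rightarrow> real \<Rightarrow> ('x \<Rightarrow> real)
    \<Rightarrow> ('x \<Rightarrow> ('i \<Rightarrow> 'a) \<Rightarrow> real) \<Rightarrow> ('x \<Rightarrow> ('i \<Rightarrow> 'a) \<Rightarrow> 'x)
    \<Rightarrow> ('x \<Rightarrow> 'i \<Rightarrow> 'a) \<Rightarrow> ('x \<Rightarrow> 'i \<Rightarrow> 'a) \<Rightarrow> ('x \<Rightarrow> 'i \<Rightarrow> 'a) \<Rightarrow> 'i list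
    \<Rightarrow> ('x \<Rightarrow> 'i \<Rightarrow> 'a) \<Rightarrow> bool" where
  "task_update U \<gamma> \<gamma>h h r f ph pold pmid os q \<longleftrightarrow>
     (\<forall>x. if x \<in> inv_set \<gamma>h h f ph
          then seq_update (\<lambda>i w. {v \<in> U i. safety_value \<gamma>h h f ph (f x (w(i := v))) \<ge> 0})
                 (\<lambda>u. r x u + \<gamma> * value_fn \<gamma> r f pold (f x u)) os (pmid x) (q x)
          else q x = pmid x)"

text \<open>A run of multi-agent dual policy iteration.  ph k, pt k, Sc k: safety policy, task policy
  and set S_c at the start of outer iteration k; phs k j: safety policy after j of the K
  safety update steps of iteration k; ordh k j, ordt k: the orderings used.\<close>
definition dpi_run :: "('i \<Rightarrow> 'a set) \<Rightarrow> real \<Rightarrow> real \<Rightarrow> ('x \<Rightarrow> real)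
    \<Rightarrow> ('x \<Rightarrow> ('i \<Rightarrow> 'a) \<Rightarrow> real) \<Rightarrow> ('x \<Rightarrow> ('i \<Rightarrow> 'a) \<Rightarrow> 'x) \<Rightarrow> nat
    \<Rightarrow> (nat \<Rightarrow> 'x \<Rightarrow> 'i \<Rightarrow> 'a) \<Rightarrow> (nat \<Rightarrow> nat \<Rightarrow> 'x \<Rightarrow> 'i \<Rightarrow> 'a) \<Rightarrow> (nat \<Rightarrow> 'x \<Rightarrow> 'i \<Rightarrow> 'a)
    \<Rightarrow> (nat \<Rightarrow> 'x set) \<Rightarrow> (nat \<Rightarrow> nat \<Rightarrow> 'i list) \<Rightarrow> (nat \<Rightarrow> 'i list) \<Rightarrow> bool" where
  "dpi_run U \<gamma> \<gamma>h h r f K ph phs pt Sc ordh ordt \<longleftrightarrow>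
     Sc 0 = {} \<and> (\<forall>x i. ph 0 x i \<in> U i) \<and> (\<forall>x i. pt 0 x i \<in> U i) \<and>
     (\<forall>k. phs k 0 = ph k \<and> ph (Suc k) = phs k K
        \<and> (\<forall>j<K. is_ordering (ordh k j) \<and> safety_step U \<gamma>h h f (ordh k j) (phs k j) (phs k (Suc j)))
        \<and> is_ordering (ordt k)
        \<and> task_update U \<gamma> \<gamma>h h r f (ph (Suc k)) (pt k)
             (\<lambda>x. if x \<in> Sc k then pt k x else ph (Suc k) x) (ordt k) (pt (Suc k))
        \<and> Sc (Suc k) = inv_set \<gamma>h h f (ph (Suc k)))"

definition twofold_J :: "real \<Rightarrow> real \<Rightarrow> ('x \<Rightarrow> real) \<Rightarrow> ('x \<Rightarrow> ('i \<Rightarrow> 'a) \<Rightarrow> real)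
    \<Rightarrow> ('x \<Rightarrow> ('i \<Rightarrow> 'a) \<Rightarrow> 'x) \<Rightarrow> 'x set \<Rightarrow> 'x pmf \<Rightarrow> ('x \<Rightarrow> 'i \<Rightarrow> 'a) \<Rightarrow> real" where
  "twofold_J \<gamma> \<gamma>h h r f S d \<pi> =
     measure_pmf.expectation d (\<lambda>x0. value_fn \<gamma> r f \<pi> x0 * indicator S x0
                                    + safety_value \<gamma>h h f \<pi> x0 * indicator (- S) x0)"

end

theory Submission
  imports Defs
begin

text \<open>Every agent-by-agent sweep weakly increases the one-step lookahead of the current value and,
  by the tie-breaking convention, strictly increases it at every state where it changes the joint
  action.  A comparison principle for the discounted Bellman equations turns this into monotonicity
  of the value functions; as there are only finitely many joint policies, the values stabilise,
  after which the lookaheads are fixed and can only increase finitely often, so the policies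
  stabilise too.  This applies first to the safety policies and then, with the invariant set
  frozen, to the task policies on it.  In the limit no agent can improve its lookahead by a
  unilateral (admissible) deviation, and the comparison principle lifts this to the equilibrium
  statements (a)--(d).\<close>

section \<open>Agent-by-agent sweeps\<close>

lemma seq_update_preserves:
  assumes "seq_update C g os w w'" "Inv w"
    and "\<And>i w v. Inv w \<Longrightarrow> v \<in> C i w \<Longrightarrow> Inv (w(i := v))"
  shows "Inv w'"
  using assms(1,2)
proof (induction os arbitrary: w)
  case Nil
  then show ?case by simp
next
  case (Cons j os)
  then obtain v where "v \<in> C j w" and "seq_update C g os (w(j := v)) w'"
    by (auto simp: is_tb_max_def)
  with Cons.IH Cons.prems(2) assms(3) show ?case by blast
qed

lemma seq_update_last_step:
  assumes "seq_update C g os w w'" "os \<noteq> []"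
    and "\<And>i w v. v \<in> C i w \<Longrightarrow> P (w(i := v))"
  shows "P w'"
  using assms(1,2)
proof (induction os arbitrary: w)
  case Nil
  then show ?case by simp
next
  case (Cons j os)
  then obtain v where v: "v \<in> C j w" and rest: "seq_update C g os (w(j := v)) w'"
    by (auto simp: is_tb_max_def)
  show ?case
  proof (cases "os = []")
    case True
    with rest have "w' = w(j := v)" by simp
    with v assms(3) show ?thesis by blast
  next
    case False
    with Cons.IH rest show ?thesis by blast
  qed
qed

text \<open>The tie-breaking convention makes a sweep a strict improvement unless it changes nothing.\<close>

lemma seq_update_increases:
  assumes "seq_update C g os w w'" "Inv w"
    and cur: "\<And>i w. Inv w \<Longrightarrow> w i \<in> C i w"
    and inv: "\<And>i w v. Inv w \<Longrightarrow> v \<in> C i w \<Longrightarrow> Inv (w(i := v))"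
  shows "g w \<le> g w' \<and> (w' \<noteq> w \<longrightarrow> g w < g w')"
  using assms(1,2)
proof (induction os arbitrary: w)
  case Nil
  then show ?case by simp
next
  case (Cons j os)
  from Cons.prems(1) obtain v where v: "is_tb_max (C j w) (\<lambda>v. g (w(j := v))) (w j) v"
    and rest: "seq_update C g os (w(j := v)) w'" by auto
  have wj: "w j \<in> C j w" using cur Cons.prems(2) .
  have vmax: "g (w(j := v')) \<le> g (w(j := v))" if "v' \<in> C j w" for v'
    using v that by (auto simp: is_tb_max_def)
  have "Inv (w(j := v))" using inv[OF Cons.prems(2)] v by (auto simp: is_tb_max_def)
  with Cons.IH rest
  have IH: "g (w(j := v)) \<le> g w' \<and> (w' \<noteq> w(j := v) \<longrightarrow> g (w(j := v)) < g w')" by blast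
  have first: "g w \<le> g (w(j := v))" using vmax[OF wj] by simp
  have "g w < g w'" if "w' \<noteq> w"
  proof (cases "v = w j")
    case True
    then have "w(j := v) = w" by simp
    with IH that show ?thesis by simp
  next
    case False
    then obtain v' where "v' \<in> C j w" "g w < g (w(j := v'))"
      using v wj by (force simp: is_tb_max_def)
    with vmax IH show ?thesis by fastforce
  qed
  with IH first show ?case by auto
qed

lemma seq_update_fixpoint:
  assumes "seq_update C g os w w" "Inv w"
    and cur: "\<And>i w. Inv w \<Longrightarrow> w i \<in> C i w"
    and inv: "\<And>i w v. Inv w \<Longrightarrow> v \<in> C i w \<Longrightarrow> Inv (w(i := v))"
    and "i \<in> set os" "v \<in> C i w"
  shows "g (w(i := v)) \<le> g w"
  using assms(1,5,6)
proof (induction os)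
  case Nil
  then show ?case by simp
next
  case (Cons j os)
  from Cons.prems(1) obtain u where u: "is_tb_max (C j w) (\<lambda>v. g (w(j := v))) (w j) u"
    and rest: "seq_update C g os (w(j := u)) w" by auto
  have "g (w(j := u)) \<le> g w"
  proof -
    have "Inv (w(j := u))" using inv[OF assms(2)] u by (auto simp: is_tb_max_def)
    from seq_update_increases[where Inv = Inv, OF rest this cur inv] show ?thesis by blast
  qed
  then have jmax: "g (w(j := v')) \<le> g w" if "v' \<in> C j w" for v'
    using u that by (fastforce simp: is_tb_max_def)
  then have "u = w j"
    using u cur[OF assms(2)] by (auto simp: is_tb_max_def)
  then have "w(j := u) = w" by simp
  with rest have "seq_update C g os w w" by simp
  show ?case
  proof (cases "i = j")
    case True
    with jmax Cons.prems(3) show ?thesis by blast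
  next
    case False
    with Cons.IH Cons.prems(2,3) \<open>seq_update C g os w w\<close> show ?thesis by simp
  qed
qed

section \<open>Bellman equations and comparison\<close>

text \<open>A negative value of the defect \<open>D\<close> would force \<open>D\<close> to diverge like \<open>\<gamma>\<^sup>-\<^sup>n\<close> along the
  orbit of \<open>g\<close>, contradicting boundedness on the finite state space.\<close>

lemma discounted_defect_nonneg:
  fixes D :: "'x::finite \<Rightarrow> real"
  assumes \<gamma>: "0 \<le> \<gamma>" "\<gamma> < 1"
    and step: "\<And>y. y \<in> S \<Longrightarrow> g y \<in> S \<and> (0 \<le> D y \<or> \<gamma> * D (g y) \<le> D y)"
    and "x \<in> S"
  shows "0 \<le> D x"
proof (rule ccontr)
  assume neg: "\<not> 0 \<le> D x"
  have orbit: "\<gamma> ^ n * D ((g ^^ n) y) \<le> D y" if "y \<in> S" "D y < 0" for n y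
    using that
  proof (induction n arbitrary: y)
    case 0
    then show ?case by simp
  next
    case (Suc n)
    with step have gy: "g y \<in> S" and descent: "\<gamma> * D (g y) \<le> D y" by force+
    with Suc.prems(2) \<gamma>(1) have "D (g y) < 0"
      by (metis less_le_trans mult_nonneg_nonneg not_le)
    with Suc.IH gy have "\<gamma> ^ n * D ((g ^^ n) (g y)) \<le> D (g y)" by blast
    with \<gamma>(1) have "\<gamma> ^ Suc n * D ((g ^^ Suc n) y) \<le> \<gamma> * D (g y)"
      by (simp add: funpow_Suc_right mult.assoc mult_left_mono del: funpow.simps)
    with descent show ?case by linarith
  qed
  define B where "B = Max (range (\<lambda>y. \<bar>D y\<bar>))"
  have "- (\<gamma> ^ n * B) \<le> D x" for n
  proof -
    have "\<bar>D ((g ^^ n) x)\<bar> \<le> B" unfolding B_def by (rule Max_ge) auto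
    then have "- B \<le> D ((g ^^ n) x)" by linarith
    with \<gamma>(1) have "\<gamma> ^ n * - B \<le> \<gamma> ^ n * D ((g ^^ n) x)" by (intro mult_left_mono) auto
    moreover have "\<gamma> ^ n * D ((g ^^ n) x) \<le> D x" using orbit \<open>x \<in> S\<close> neg by simp
    ultimately show ?thesis by simp
  qed
  moreover have "(\<lambda>n. - (\<gamma> ^ n * B)) \<longlonglongrightarrow> - (0 * B)"
    using \<gamma> by (intro tendsto_minus tendsto_mult LIMSEQ_power_zero) auto
  ultimately have "0 \<le> D x" using LIMSEQ_le_const2 by fastforce
  with neg show False by simp
qed

lemma traj_0 [simp]: "traj f p x 0 = x"
  by (simp add: traj_def)

lemma traj_Suc: "traj f p x (Suc t) = traj f p (f x (p x)) t"
  by (simp add: traj_def funpow_Suc_right del: funpow.simps)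

context
  fixes \<gamma>h :: real and h :: "'x::finite \<Rightarrow> real" and f :: "'x \<Rightarrow> ('i \<Rightarrow> 'a) \<Rightarrow> 'x"
  assumes \<gamma>h: "0 < \<gamma>h" "\<gamma>h < 1"
begin

lemma safety_value_le:
  "safety_value \<gamma>h h f p x \<le> \<gamma>h ^ Suc t * h (traj f p x t)"
proof -
  have "bdd_below (range (\<lambda>t. \<gamma>h ^ Suc t * h (traj f p x t)))"
  proof (rule bdd_belowI2)
    fix t
    have "\<bar>\<gamma>h ^ Suc t * h (traj f p x t)\<bar> = \<gamma>h ^ Suc t * \<bar>h (traj f p x t)\<bar>"
      using \<gamma>h by (simp add: abs_mult)
    also have "\<dots> \<le> \<bar>h (traj f p x t)\<bar>"
      using \<gamma>h by (intro mult_left_le_one_le power_le_one) auto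
    also have "\<dots> \<le> Max (range (\<lambda>y. \<bar>h y\<bar>))" by (rule Max_ge) auto
    finally show "- Max (range (\<lambda>y. \<bar>h y\<bar>)) \<le> \<gamma>h ^ Suc t * h (traj f p x t)"
      by linarith
  qed
  then show ?thesis unfolding safety_value_def by (rule cINF_lower) simp
qed

lemma safety_value_bellman:
  "safety_value \<gamma>h h f p x = min (\<gamma>h * h x) (\<gamma>h * safety_value \<gamma>h h f p (f x (p x)))"
proof (rule antisym)
  let ?V = "safety_value \<gamma>h h f p" and ?x1 = "f x (p x)"
  have "?V x / \<gamma>h \<le> ?V ?x1"
    unfolding safety_value_def[of _ _ _ _ ?x1]
  proof (rule cINF_greatest)
    fix t
    have "?V x \<le> \<gamma>h * (\<gamma>h ^ Suc t * h (traj f p ?x1 t))"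
      using safety_value_le[of p x "Suc t"] by (simp add: traj_Suc)
    with \<gamma>h show "?V x / \<gamma>h \<le> \<gamma>h ^ Suc t * h (traj f p ?x1 t)"
      by (simp add: divide_le_eq mult.commute)
  qed simp
  with \<gamma>h have "?V x \<le> \<gamma>h * ?V ?x1" by (simp add: divide_le_eq mult.commute)
  with safety_value_le[of p x 0] show "?V x \<le> min (\<gamma>h * h x) (\<gamma>h * ?V ?x1)" by simp
  show "min (\<gamma>h * h x) (\<gamma>h * ?V ?x1) \<le> ?V x"
    unfolding safety_value_def[of _ _ _ _ x]
  proof (rule cINF_greatest)
    fix t
    show "min (\<gamma>h * h x) (\<gamma>h * ?V ?x1) \<le> \<gamma>h ^ Suc t * h (traj f p x t)"
    proof (cases t)
      case (Suc s)
      have "\<gamma>h * ?V ?x1 \<le> \<gamma>h * (\<gamma>h ^ Suc s * h (traj f p ?x1 s))"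
        using \<gamma>h safety_value_le[of p ?x1 s] by (intro mult_left_mono) auto
      with Suc show ?thesis by (simp add: traj_Suc mult.assoc min_le_iff_disj)
    qed simp
  qed simp
qed

lemma safety_value_nonpos: "safety_value \<gamma>h h f p x \<le> 0"
proof -
  define B where "B = Max (range (\<lambda>y. \<bar>h y\<bar>))"
  have "safety_value \<gamma>h h f p x \<le> \<gamma>h ^ Suc t * B" for t
  proof -
    have "\<bar>h (traj f p x t)\<bar> \<le> B" unfolding B_def by (rule Max_ge) auto
    with \<gamma>h have "\<gamma>h ^ Suc t * h (traj f p x t) \<le> \<gamma>h ^ Suc t * B"
      by (intro mult_left_mono) auto
    with safety_value_le[of p x t] show ?thesis by linarith
  qed
  moreover have "(\<lambda>t. \<gamma>h ^ Suc t * B) \<longlonglongrightarrow> 0 * B"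
    using \<gamma>h by (intro tendsto_mult LIMSEQ_Suc[OF LIMSEQ_power_zero]) auto
  ultimately show ?thesis using LIMSEQ_le_const by fastforce
qed

lemma safety_value_le_supersolution:
  assumes "\<And>y. min (\<gamma>h * h y) (\<gamma>h * W (f y (p y))) \<le> W y"
  shows "safety_value \<gamma>h h f p x \<le> W x"
proof -
  let ?V = "safety_value \<gamma>h h f p"
  have "0 \<le> W y - ?V y \<or> \<gamma>h * (W (f y (p y)) - ?V (f y (p y))) \<le> W y - ?V y" for y
    using assms[of y] safety_value_bellman[of p y]
    by (simp add: min_def right_diff_distrib split: if_splits)
  then have "0 \<le> W x - ?V x"
    by (intro discounted_defect_nonneg[where S = UNIV and g = "\<lambda>y. f y (p y)"
          and D = "\<lambda>y. W y - ?V y"]) (use \<gamma>h in auto)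
  then show ?thesis by simp
qed

lemma safety_value_ge_subsolution:
  assumes "\<And>y. W y \<le> min (\<gamma>h * h y) (\<gamma>h * W (f y (p y)))"
  shows "W x \<le> safety_value \<gamma>h h f p x"
proof -
  let ?V = "safety_value \<gamma>h h f p"
  have "0 \<le> ?V y - W y \<or> \<gamma>h * (?V (f y (p y)) - W (f y (p y))) \<le> ?V y - W y" for y
    using assms[of y] safety_value_bellman[of p y]
    by (simp add: min_def right_diff_distrib split: if_splits)
  then have "0 \<le> ?V x - W x"
    by (intro discounted_defect_nonneg[where S = UNIV and g = "\<lambda>y. f y (p y)"
          and D = "\<lambda>y. ?V y - W y"]) (use \<gamma>h in auto)
  then show ?thesis by simp
qed

end

context
  fixes \<gamma> :: real and r :: "'x::finite \<Rightarrow> ('i \<Rightarrow> 'a) \<Rightarrow> real" and f :: "'x \<Rightarrow> ('i \<Rightarrow> 'a) \<Rightarrow> 'x"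
  assumes \<gamma>: "0 < \<gamma>" "\<gamma> < 1"
begin

lemma summable_discounted_reward:
  "summable (\<lambda>t. \<gamma> ^ t * r (traj f p x t) (p (traj f p x t)))"
proof (rule summable_comparison_test)
  let ?R = "Max (range (\<lambda>y. \<bar>r y (p y)\<bar>))"
  show "\<exists>N. \<forall>n\<ge>N. norm (\<gamma> ^ n * r (traj f p x n) (p (traj f p x n))) \<le> \<gamma> ^ n * ?R"
  proof (intro exI allI impI)
    fix n
    have "\<bar>r (traj f p x n) (p (traj f p x n))\<bar> \<le> ?R" by (rule Max_ge) auto
    with \<gamma> show "norm (\<gamma> ^ n * r (traj f p x n) (p (traj f p x n))) \<le> \<gamma> ^ n * ?R"
      by (simp add: abs_mult mult_left_mono)
  qed
  show "summable (\<lambda>n. \<gamma> ^ n * ?R)"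
    using \<gamma> by (intro summable_mult2 summable_geometric) simp
qed

lemma value_fn_bellman:
  "value_fn \<gamma> r f p x = r x (p x) + \<gamma> * value_fn \<gamma> r f p (f x (p x))"
proof -
  let ?a = "\<lambda>t. \<gamma> ^ t * r (traj f p x t) (p (traj f p x t))"
  let ?b = "\<lambda>t. \<gamma> ^ t * r (traj f p (f x (p x)) t) (p (traj f p (f x (p x)) t))"
  have "suminf ?a - ?a 0 = (\<Sum>t. ?a (Suc t))"
    by (rule suminf_split_head[symmetric]) (rule summable_discounted_reward)
  also have "\<dots> = (\<Sum>t. \<gamma> * ?b t)" by (simp add: traj_Suc mult.assoc)
  also have "\<dots> = \<gamma> * suminf ?b" by (rule suminf_mult) (rule summable_discounted_reward)
  finally have "suminf ?a - ?a 0 = \<gamma> * suminf ?b" .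
  then show ?thesis unfolding value_fn_def by simp
qed

lemma value_fn_le_supersolution:
  assumes "\<And>y. y \<in> S \<Longrightarrow> f y (p y) \<in> S \<and> r y (p y) + \<gamma> * W (f y (p y)) \<le> W y"
    and "x \<in> S"
  shows "value_fn \<gamma> r f p x \<le> W x"
proof -
  let ?V = "value_fn \<gamma> r f p"
  have "f y (p y) \<in> S \<and> \<gamma> * (W (f y (p y)) - ?V (f y (p y))) \<le> W y - ?V y" if "y \<in> S" for y
    using assms(1)[OF that] value_fn_bellman[of p y] by (simp add: right_diff_distrib)
  then have "0 \<le> W x - ?V x"
    by (intro discounted_defect_nonneg[where g = "\<lambda>y. f y (p y)" and D = "\<lambda>y. W y - ?V y"])
      (use \<gamma> assms(2) in auto)
  then show ?thesis by simp
qed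

lemma value_fn_ge_subsolution:
  assumes "\<And>y. y \<in> S \<Longrightarrow> f y (p y) \<in> S \<and> W y \<le> r y (p y) + \<gamma> * W (f y (p y))"
    and "x \<in> S"
  shows "W x \<le> value_fn \<gamma> r f p x"
proof -
  let ?V = "value_fn \<gamma> r f p"
  have "f y (p y) \<in> S \<and> \<gamma> * (?V (f y (p y)) - W (f y (p y))) \<le> ?V y - W y" if "y \<in> S" for y
    using assms(1)[OF that] value_fn_bellman[of p y] by (simp add: right_diff_distrib)
  then have "0 \<le> ?V x - W x"
    by (intro discounted_defect_nonneg[where g = "\<lambda>y. f y (p y)" and D = "\<lambda>y. ?V y - W y"])
      (use \<gamma> assms(2) in auto)
  then show ?thesis by simp
qed

end

section \<open>Stabilisation of policy improvement\<close>

lemma finite_policies: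
  assumes "\<And>i. finite (U i)"
  shows "finite {p :: 'x::finite \<Rightarrow> 'i::finite \<Rightarrow> 'a. \<forall>x i. p x i \<in> U i}"
proof -
  have "{p :: 'x \<Rightarrow> 'i \<Rightarrow> 'a. \<forall>x i. p x i \<in> U i} = Pi\<^sub>E UNIV (\<lambda>_. Pi\<^sub>E UNIV U)"
    by (auto simp: PiE_UNIV_domain Pi_def)
  moreover have "finite (Pi\<^sub>E UNIV (\<lambda>_::'x. Pi\<^sub>E UNIV U))"
    by (intro finite_PiE) (auto intro: finite_PiE assms)
  ultimately show ?thesis by simp
qed

lemma eq_from_Suc_eq:
  assumes "\<And>n. N \<le> n \<Longrightarrow> a (Suc n) = a n" and "N \<le> n"
  shows "a n = a N"
  using assms(2) by (induction n rule: dec_induct) (simp_all add: assms(1))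

lemma incseq_finite_range_eventually_const:
  fixes a :: "nat \<Rightarrow> 'b::linorder"
  assumes "finite (range a)" and mono: "\<And>n. n0 \<le> n \<Longrightarrow> a n \<le> a (Suc n)"
  shows "\<exists>N\<ge>n0. \<forall>n\<ge>N. a n = a N"
proof -
  have fin: "finite (a ` {n0..})" using assms(1) by (rule finite_subset[rotated]) auto
  obtain N where N: "n0 \<le> N" "a N = Max (a ` {n0..})"
    using Max_in[OF fin] by fastforce
  have "a n = a N" if "N \<le> n" for n
  proof (rule antisym)
    show "a n \<le> a N" using N that by (simp add: fin)
    show "a N \<le> a n"
      using that
    proof (induction n rule: dec_induct)
      case (step m)
      with N(1) have "a m \<le> a (Suc m)" by (intro mono) simp
      with step.IH show ?case by (rule order.trans)
    qed simp
  qed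
  with N show ?thesis by blast
qed

text \<open>The sum over \<open>S\<close> stabilises, and then so does every summand.\<close>

lemma pointwise_incseq_eventually_const:
  fixes a :: "nat \<Rightarrow> 'x::finite \<Rightarrow> real"
  assumes "finite (range a)" and mono: "\<And>n x. n0 \<le> n \<Longrightarrow> x \<in> S \<Longrightarrow> a n x \<le> a (Suc n) x"
  shows "\<exists>N\<ge>n0. \<forall>n\<ge>N. \<forall>x\<in>S. a n x = a N x"
proof -
  let ?\<Phi> = "\<lambda>n. \<Sum>x\<in>S. a n x"
  have "range ?\<Phi> \<subseteq> (\<lambda>b. \<Sum>x\<in>S. b x) ` range a" by auto
  moreover have "finite ((\<lambda>b. \<Sum>x\<in>S. b x) ` range a)" using assms(1) by simp
  ultimately have "finite (range ?\<Phi>)" by (rule finite_subset)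
  moreover have "?\<Phi> n \<le> ?\<Phi> (Suc n)" if "n0 \<le> n" for n
    using that mono by (intro sum_mono) auto
  ultimately have "\<exists>N\<ge>n0. \<forall>n\<ge>N. ?\<Phi> n = ?\<Phi> N"
    by (rule incseq_finite_range_eventually_const)
  then obtain N where N: "n0 \<le> N" "\<And>n. N \<le> n \<Longrightarrow> ?\<Phi> n = ?\<Phi> N"
    by blast
  have step: "a (Suc n) x = a n x" if "N \<le> n" "x \<in> S" for n x
  proof (rule ccontr)
    assume "a (Suc n) x \<noteq> a n x"
    with mono[of n x] that N(1) have "a n x < a (Suc n) x" by simp
    have "?\<Phi> n < ?\<Phi> (Suc n)"
    proof (rule sum_strict_mono_ex1)
      show "\<forall>y\<in>S. a n y \<le> a (Suc n) y" using mono that(1) N(1) by simp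
      show "\<exists>y\<in>S. a n y < a (Suc n) y" using \<open>a n x < a (Suc n) x\<close> that(2) by blast
    qed simp
    with N(2)[of n] N(2)[of "Suc n"] that(1) show False by simp
  qed
  have "a n x = a N x" if "N \<le> n" "x \<in> S" for n x
    by (rule eq_from_Suc_eq[where a = "\<lambda>n. a n x", OF _ that(1)]) (simp add: step that(2))
  with N(1) show ?thesis by blast
qed

text \<open>Abstract policy improvement: \<open>Val p\<close> is the value of policy \<open>p\<close> and \<open>Lk W x u\<close> the
  lookahead of action \<open>u\<close> at \<open>x\<close> against a value \<open>W\<close>, which only matters on \<open>S\<close>.  Once the
  values have stabilised the lookaheads are fixed, and every change of action raises one of them.\<close>

lemma policy_improvement_stabilises:
  fixes q :: "nat \<Rightarrow> 'x::finite \<Rightarrow> 'a"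
    and Val :: "('x \<Rightarrow> 'a) \<Rightarrow> 'x \<Rightarrow> real" and Lk :: "('x \<Rightarrow> real) \<Rightarrow> 'x \<Rightarrow> 'a \<Rightarrow> real"
  assumes "finite (range q)"
    and value_mono: "\<And>n x. n0 \<le> n \<Longrightarrow> x \<in> S \<Longrightarrow> Val (q n) x \<le> Val (q (Suc n)) x"
    and improve: "\<And>n x. n0 \<le> n \<Longrightarrow> x \<in> S \<Longrightarrow>
      Lk (Val (q n)) x (q n x) \<le> Lk (Val (q n)) x (q (Suc n) x)"
    and strict: "\<And>n x. n0 \<le> n \<Longrightarrow> x \<in> S \<Longrightarrow> q (Suc n) x \<noteq> q n x \<Longrightarrow>
      Lk (Val (q n)) x (q n x) < Lk (Val (q n)) x (q (Suc n) x)"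
    and local: "\<And>n x W W'. n0 \<le> n \<Longrightarrow> x \<in> S \<Longrightarrow> \<forall>y\<in>S. W y = W' y \<Longrightarrow>
      Lk W x (q n x) = Lk W' x (q n x)"
  shows "\<exists>N\<ge>n0. \<forall>n\<ge>N. \<forall>x\<in>S. q n x = q N x"
proof -
  have "range (\<lambda>n. Val (q n)) = Val ` range q" by auto
  with assms(1) have "finite (range (\<lambda>n. Val (q n)))" by simp
  then have "\<exists>n1\<ge>n0. \<forall>n\<ge>n1. \<forall>x\<in>S. Val (q n) x = Val (q n1) x"
    using value_mono by (rule pointwise_incseq_eventually_const)
  then obtain n1 where n1: "n0 \<le> n1" "\<And>n x. n1 \<le> n \<Longrightarrow> x \<in> S \<Longrightarrow> Val (q n) x = Val (q n1) x"
    by blast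
  let ?a = "\<lambda>n x. Lk (Val (q n1)) x (q n x)"
  have frozen: "Lk (Val (q n)) x (q m x) = ?a m x" if "n1 \<le> n" "n0 \<le> m" "x \<in> S" for n m x
    using local[OF that(2,3)] n1(2)[OF that(1)] by blast
  have "range ?a = (\<lambda>p x. Lk (Val (q n1)) x (p x)) ` range q" by auto
  with assms(1) have "finite (range ?a)" by simp
  moreover have "?a n x \<le> ?a (Suc n) x" if "n1 \<le> n" "x \<in> S" for n x
    using improve[of n x] frozen[of n n x] frozen[of n "Suc n" x] that n1(1) by simp
  ultimately have "\<exists>n2\<ge>n1. \<forall>n\<ge>n2. \<forall>x\<in>S. ?a n x = ?a n2 x"
    by (rule pointwise_incseq_eventually_const)
  then obtain n2 where n2: "n1 \<le> n2" "\<And>n x. n2 \<le> n \<Longrightarrow> x \<in> S \<Longrightarrow> ?a n x = ?a n2 x"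
    by blast
  have step: "q (Suc n) x = q n x" if "n2 \<le> n" "x \<in> S" for n x
  proof (rule ccontr)
    assume "q (Suc n) x \<noteq> q n x"
    with strict[of n x] frozen[of n n x] frozen[of n "Suc n" x] that n1(1) n2(1)
    have "?a n x < ?a (Suc n) x" by simp
    with n2(2)[of n x] n2(2)[of "Suc n" x] that show False by simp
  qed
  have "q n x = q n2 x" if "n2 \<le> n" "x \<in> S" for n x
    by (rule eq_from_Suc_eq[where a = "\<lambda>n. q n x", OF _ that(1)]) (simp add: step that(2))
  moreover have "n0 \<le> n2" using n1(1) n2(1) by simp
  ultimately show ?thesis by blast
qed

section \<open>Safety and task steps\<close>

text \<open>With \<open>W = V\<^sub>h\<^sup>\<pi>\<^sup>h\<close> this is the invariant action set \<open>U\<^sub>i\<^sup>\<pi>\<^sup>h(x, u\<^sub>-\<^sub>i)\<close>, and \<open>lookahead\<close>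
  is the objective of the task update.\<close>

abbreviation invariant_actions ::
    "('i \<Rightarrow> 'a set) \<Rightarrow> ('x \<Rightarrow> real) \<Rightarrow> ('x \<Rightarrow> ('i \<Rightarrow> 'a) \<Rightarrow> 'x) \<Rightarrow> 'x \<Rightarrow> 'i \<Rightarrow> ('i \<Rightarrow> 'a) \<Rightarrow> 'a set"
  where "invariant_actions U W f x i w \<equiv> {v \<in> U i. 0 \<le> W (f x (w(i := v)))}"

abbreviation lookahead ::
    "real \<Rightarrow> ('x \<Rightarrow> 'u \<Rightarrow> real) \<Rightarrow> ('x \<Rightarrow> 'u \<Rightarrow> 'x) \<Rightarrow> ('x \<Rightarrow> real) \<Rightarrow> 'x \<Rightarrow> 'u \<Rightarrow> real"
  where "lookahead \<gamma> r f W x u \<equiv> r x u + \<gamma> * W (f x u)"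

lemma safety_step_valid:
  assumes "safety_step U \<gamma>h h f os p q" "\<forall>x i. p x i \<in> U i"
  shows "\<forall>x i. q x i \<in> U i"
proof (intro allI)
  fix x i
  have "seq_update (\<lambda>i w. U i) (\<lambda>u. safety_value \<gamma>h h f p (f x u)) os (p x) (q x)"
    using assms(1) unfolding safety_step_def by blast
  then have "\<forall>i. q x i \<in> U i"
    by (rule seq_update_preserves[where Inv = "\<lambda>w. \<forall>i. w i \<in> U i"]) (use assms(2) in auto)
  then show "q x i \<in> U i" ..
qed

lemma safety_step_improves:
  assumes "safety_step U \<gamma>h h f os p q" "\<forall>x i. p x i \<in> U i"
  shows "safety_value \<gamma>h h f p (f x (p x)) \<le> safety_value \<gamma>h h f p (f x (q x))
    \<and> (q x \<noteq> p x \<longrightarrow> safety_value \<gamma>h h f p (f x (p x)) < safety_value \<gamma>h h f p (f x (q x)))"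
proof -
  have "seq_update (\<lambda>i w. U i) (\<lambda>u. safety_value \<gamma>h h f p (f x u)) os (p x) (q x)"
    using assms(1) unfolding safety_step_def by blast
  then show ?thesis
    by (rule seq_update_increases[where Inv = "\<lambda>w. \<forall>i. w i \<in> U i"]) (use assms(2) in auto)
qed

lemma safety_step_fixpoint:
  assumes "safety_step U \<gamma>h h f os p p" "\<forall>x i. p x i \<in> U i" "i \<in> set os" "v \<in> U i"
  shows "safety_value \<gamma>h h f p (f x ((p x)(i := v))) \<le> safety_value \<gamma>h h f p (f x (p x))"
proof -
  have "seq_update (\<lambda>i w. U i) (\<lambda>u. safety_value \<gamma>h h f p (f x u)) os (p x) (p x)"
    using assms(1) unfolding safety_step_def by blast
  then show ?thesis
    by (rule seq_update_fixpoint[where Inv = "\<lambda>w. \<forall>i. w i \<in> U i"]) (use assms(2-4) in auto)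
qed

lemma task_sweep_valid:
  assumes "seq_update (invariant_actions U W f x) g os w w'" "\<forall>i. w i \<in> U i"
  shows "\<forall>i. w' i \<in> U i"
  using assms by (rule seq_update_preserves[where Inv = "\<lambda>w. \<forall>i. w i \<in> U i"]) auto

lemma task_sweep_invariant:
  assumes "seq_update (invariant_actions U W f x) g os w w'" "os \<noteq> []"
  shows "0 \<le> W (f x w')"
  using assms by (rule seq_update_last_step[where P = "\<lambda>w. 0 \<le> W (f x w)"]) auto

lemma task_sweep_improves:
  assumes "seq_update (invariant_actions U W f x) (lookahead \<gamma> r f V x) os w w'"
    and "\<forall>i. w i \<in> U i" "0 \<le> W (f x w)"
  shows "lookahead \<gamma> r f V x w \<le> lookahead \<gamma> r f V x w'
    \<and> (w' \<noteq> w \<longrightarrow> lookahead \<gamma> r f V x w < lookahead \<gamma> r f V x w')"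
  using assms(1)
  by (rule seq_update_increases[where Inv = "\<lambda>w. (\<forall>i. w i \<in> U i) \<and> 0 \<le> W (f x w)"])
    (use assms(2,3) in auto)

lemma task_sweep_fixpoint:
  assumes "seq_update (invariant_actions U W f x) (lookahead \<gamma> r f V x) os w w"
    and "\<forall>i. w i \<in> U i" "0 \<le> W (f x w)" "i \<in> set os" "v \<in> U i" "0 \<le> W (f x (w(i := v)))"
  shows "lookahead \<gamma> r f V x (w(i := v)) \<le> lookahead \<gamma> r f V x w"
  using assms(1)
  by (rule seq_update_fixpoint[where Inv = "\<lambda>w. (\<forall>i. w i \<in> U i) \<and> 0 \<le> W (f x w)"])
    (use assms(2-6) in auto)

context
  fixes \<gamma>h :: real and h :: "'x::finite \<Rightarrow> real" and f :: "'x \<Rightarrow> ('i::finite \<Rightarrow> 'a) \<Rightarrow> 'x"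
    and U :: "'i \<Rightarrow> 'a set"
  assumes \<gamma>h: "0 < \<gamma>h" "\<gamma>h < 1"
begin

lemma safety_step_value_mono:
  assumes "safety_step U \<gamma>h h f os p q" "\<forall>x i. p x i \<in> U i"
  shows "safety_value \<gamma>h h f p x \<le> safety_value \<gamma>h h f q x"
proof (rule safety_value_ge_subsolution[OF \<gamma>h])
  fix y
  have "safety_value \<gamma>h h f p (f y (p y)) \<le> safety_value \<gamma>h h f p (f y (q y))"
    using safety_step_improves[OF assms] by blast
  with \<gamma>h show "safety_value \<gamma>h h f p y
      \<le> min (\<gamma>h * h y) (\<gamma>h * safety_value \<gamma>h h f p (f y (q y)))"
    by (subst safety_value_bellman[OF \<gamma>h]) (simp add: min_le_iff_disj)
qed

lemma safety_iteration_stabilises: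
  assumes "\<And>i. finite (U i)" "\<And>n. \<forall>x i. s n x i \<in> U i"
    and "\<And>n. \<exists>os. safety_step U \<gamma>h h f os (s n) (s (Suc n))"
  shows "\<exists>N. \<forall>n\<ge>N. s n = s N"
proof -
  have "range s \<subseteq> {p. \<forall>x i. p x i \<in> U i}" using assms(2) by auto
  moreover have "finite {p :: 'x \<Rightarrow> 'i \<Rightarrow> 'a. \<forall>x i. p x i \<in> U i}"
    using assms(1) by (rule finite_policies)
  ultimately have "finite (range s)" by (rule finite_subset)
  then have "\<exists>N\<ge>0. \<forall>n\<ge>N. \<forall>x\<in>UNIV. s n x = s N x"
  proof (rule policy_improvement_stabilises[where Val = "safety_value \<gamma>h h f"
        and Lk = "\<lambda>W x u. W (f x u)"])
    fix n x
    from assms(3) obtain os where step: "safety_step U \<gamma>h h f os (s n) (s (Suc n))" ..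
    show "safety_value \<gamma>h h f (s n) x \<le> safety_value \<gamma>h h f (s (Suc n)) x"
      using safety_step_value_mono[OF step assms(2)] .
    show "safety_value \<gamma>h h f (s n) (f x (s n x)) \<le> safety_value \<gamma>h h f (s n) (f x (s (Suc n) x))"
      and "s (Suc n) x \<noteq> s n x \<Longrightarrow>
        safety_value \<gamma>h h f (s n) (f x (s n x)) < safety_value \<gamma>h h f (s n) (f x (s (Suc n) x))"
      using safety_step_improves[OF step assms(2)] by blast+
  qed simp
  then show ?thesis by blast
qed

lemma safety_deviation_le:
  assumes nash: "\<And>x i v. v \<in> U i \<Longrightarrow>
      safety_value \<gamma>h h f ph (f x ((ph x)(i := v))) \<le> safety_value \<gamma>h h f ph (f x (ph x))"
    and "\<forall>y. \<pi>i y \<in> U i" and off: "\<And>y. y \<notin> inv_set \<gamma>h h f ph \<Longrightarrow> p y = ph y"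
  shows "safety_value \<gamma>h h f (deviate p i \<pi>i) x \<le> safety_value \<gamma>h h f ph x"
proof (rule safety_value_le_supersolution[OF \<gamma>h])
  fix y
  let ?Vh = "safety_value \<gamma>h h f ph"
  show "min (\<gamma>h * h y) (\<gamma>h * ?Vh (f y (deviate p i \<pi>i y))) \<le> ?Vh y"
  proof (cases "y \<in> inv_set \<gamma>h h f ph")
    case True
    then have "?Vh y = 0"
      using safety_value_nonpos[OF \<gamma>h, of h f ph y] by (simp add: inv_set_def)
    moreover have "\<gamma>h * ?Vh (f y (deviate p i \<pi>i y)) \<le> 0"
      using \<gamma>h safety_value_nonpos[OF \<gamma>h, of h f ph] by (simp add: mult_nonneg_nonpos)
    ultimately show ?thesis by linarith
  next
    case False
    then have "deviate p i \<pi>i y = (ph y)(i := \<pi>i y)" by (simp add: deviate_def off)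
    with nash[of "\<pi>i y" i y] assms(2) \<gamma>h
    have "\<gamma>h * ?Vh (f y (deviate p i \<pi>i y)) \<le> \<gamma>h * ?Vh (f y (ph y))" by simp
    then show ?thesis by (subst (2) safety_value_bellman[OF \<gamma>h]) linarith
  qed
qed

lemma safety_value_ge_of_invariant:
  assumes off: "\<And>y. y \<notin> inv_set \<gamma>h h f ph \<Longrightarrow> p y = ph y"
    and keep: "\<And>y. y \<in> inv_set \<gamma>h h f ph \<Longrightarrow> 0 \<le> safety_value \<gamma>h h f ph (f y (p y))"
  shows "safety_value \<gamma>h h f ph x \<le> safety_value \<gamma>h h f p x"
proof (rule safety_value_ge_subsolution[OF \<gamma>h])
  fix y
  let ?Vh = "safety_value \<gamma>h h f ph"
  show "?Vh y \<le> min (\<gamma>h * h y) (\<gamma>h * ?Vh (f y (p y)))"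
  proof (cases "y \<in> inv_set \<gamma>h h f ph")
    case True
    with keep \<gamma>h have "0 \<le> \<gamma>h * ?Vh (f y (p y))" by simp
    moreover have "?Vh y \<le> 0" by (rule safety_value_nonpos[OF \<gamma>h])
    moreover have "?Vh y \<le> \<gamma>h * h y" by (subst safety_value_bellman[OF \<gamma>h]) simp
    ultimately show ?thesis by simp
  next
    case False
    then show ?thesis by (subst safety_value_bellman[OF \<gamma>h]) (simp add: off)
  qed
qed

end

context
  fixes \<gamma> :: real and r :: "'x::finite \<Rightarrow> ('i::finite \<Rightarrow> 'a) \<Rightarrow> real" and f :: "'x \<Rightarrow> ('i \<Rightarrow> 'a) \<Rightarrow> 'x"
    and U :: "'i \<Rightarrow> 'a set" and W :: "'x \<Rightarrow> real"
  assumes \<gamma>: "0 < \<gamma>" "\<gamma> < 1"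
begin

lemma task_iteration_stabilises:
  assumes "\<And>i. finite (U i)" "\<And>n. \<forall>x i. q n x i \<in> U i"
    and invariant: "\<And>n x. n0 \<le> n \<Longrightarrow> 0 \<le> W x \<Longrightarrow> 0 \<le> W (f x (q n x))"
    and sweep: "\<And>n x. n0 \<le> n \<Longrightarrow> 0 \<le> W x \<Longrightarrow> \<exists>os. seq_update (invariant_actions U W f x)
      (lookahead \<gamma> r f (value_fn \<gamma> r f (q n)) x) os (q n x) (q (Suc n) x)"
  shows "\<exists>N\<ge>n0. \<forall>n\<ge>N. \<forall>x. 0 \<le> W x \<longrightarrow> q n x = q N x"
proof -
  let ?S = "{x. 0 \<le> W x}"
  have improves: "lookahead \<gamma> r f (value_fn \<gamma> r f (q n)) x (q n x)
      \<le> lookahead \<gamma> r f (value_fn \<gamma> r f (q n)) x (q (Suc n) x)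
    \<and> (q (Suc n) x \<noteq> q n x \<longrightarrow> lookahead \<gamma> r f (value_fn \<gamma> r f (q n)) x (q n x)
      < lookahead \<gamma> r f (value_fn \<gamma> r f (q n)) x (q (Suc n) x))"
    if "n0 \<le> n" "x \<in> ?S" for n x
  proof -
    from sweep that obtain os where sw: "seq_update (invariant_actions U W f x)
      (lookahead \<gamma> r f (value_fn \<gamma> r f (q n)) x) os (q n x) (q (Suc n) x)" by auto
    show ?thesis
      by (rule task_sweep_improves[where U = U and W = W and f = f and x = x and \<gamma> = \<gamma> and r = r
          and V = "value_fn \<gamma> r f (q n)", OF sw])
        (use assms(2) invariant that in auto)
  qed
  have "range q \<subseteq> {p. \<forall>x i. p x i \<in> U i}" using assms(2) by auto
  moreover have "finite {p :: 'x \<Rightarrow> 'i \<Rightarrow> 'a. \<forall>x i. p x i \<in> U i}"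
    using assms(1) by (rule finite_policies)
  ultimately have "finite (range q)" by (rule finite_subset)
  then have "\<exists>N\<ge>n0. \<forall>n\<ge>N. \<forall>x\<in>?S. q n x = q N x"
  proof (rule policy_improvement_stabilises[where Val = "value_fn \<gamma> r f"
        and Lk = "lookahead \<gamma> r f"])
    fix n x assume n: "n0 \<le> n" and x: "x \<in> ?S"
    show "value_fn \<gamma> r f (q n) x \<le> value_fn \<gamma> r f (q (Suc n)) x"
    proof (rule value_fn_ge_subsolution[OF \<gamma> _ x])
      fix y assume y: "y \<in> ?S"
      with improves[OF n y] value_fn_bellman[OF \<gamma>, of r f "q n" y] invariant[of "Suc n" y] n
      show "f y (q (Suc n) y) \<in> ?S \<and> value_fn \<gamma> r f (q n) y
          \<le> r y (q (Suc n) y) + \<gamma> * value_fn \<gamma> r f (q n) (f y (q (Suc n) y))"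
        by simp
    qed
    show "lookahead \<gamma> r f (value_fn \<gamma> r f (q n)) x (q n x)
        \<le> lookahead \<gamma> r f (value_fn \<gamma> r f (q n)) x (q (Suc n) x)"
      and "q (Suc n) x \<noteq> q n x \<Longrightarrow> lookahead \<gamma> r f (value_fn \<gamma> r f (q n)) x (q n x)
        < lookahead \<gamma> r f (value_fn \<gamma> r f (q n)) x (q (Suc n) x)"
      using improves[OF n x] by blast+
  next
    fix n x and V V' :: "'x \<Rightarrow> real"
    assume "n0 \<le> n" "x \<in> ?S" "\<forall>y\<in>?S. V y = V' y"
    with invariant show "lookahead \<gamma> r f V x (q n x) = lookahead \<gamma> r f V' x (q n x)" by simp
  qed
  then show ?thesis by simp
qed

lemma task_deviation_le:
  assumes nash: "\<And>x i v. 0 \<le> W x \<Longrightarrow> v \<in> U i \<Longrightarrow> 0 \<le> W (f x ((p x)(i := v))) \<Longrightarrow>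
      lookahead \<gamma> r f (value_fn \<gamma> r f p) x ((p x)(i := v))
      \<le> lookahead \<gamma> r f (value_fn \<gamma> r f p) x (p x)"
    and "\<forall>y. \<pi>i y \<in> U i" and keep: "\<And>y. 0 \<le> W y \<Longrightarrow> 0 \<le> W (f y ((p y)(i := \<pi>i y)))"
    and "0 \<le> W x"
  shows "value_fn \<gamma> r f (deviate p i \<pi>i) x \<le> value_fn \<gamma> r f p x"
proof (rule value_fn_le_supersolution[OF \<gamma>, where S = "{y. 0 \<le> W y}"])
  fix y assume "y \<in> {y. 0 \<le> W y}"
  with nash[of y "\<pi>i y" i] assms(2) keep[of y] value_fn_bellman[OF \<gamma>, of r f p y]
  show "f y (deviate p i \<pi>i y) \<in> {y. 0 \<le> W y} \<and> r y (deviate p i \<pi>i y)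
      + \<gamma> * value_fn \<gamma> r f p (f y (deviate p i \<pi>i y)) \<le> value_fn \<gamma> r f p y"
    by (simp add: deviate_def)
qed (use assms(4) in simp)

end

lemma twofold_J_mono:
  fixes p q :: "'x::finite \<Rightarrow> 'i \<Rightarrow> 'a"
  assumes "\<And>x. x \<in> S \<Longrightarrow> value_fn \<gamma> r f p x \<le> value_fn \<gamma> r f q x"
    and "\<And>x. x \<notin> S \<Longrightarrow> safety_value \<gamma>h h f p x \<le> safety_value \<gamma>h h f q x"
  shows "twofold_J \<gamma> \<gamma>h h r f S d p \<le> twofold_J \<gamma> \<gamma>h h r f S d q"
  unfolding twofold_J_def
proof (rule integral_mono)
  fix x
  show "value_fn \<gamma> r f p x * indicator S x + safety_value \<gamma>h h f p x * indicator (- S) x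
      \<le> value_fn \<gamma> r f q x * indicator S x + safety_value \<gamma>h h f q x * indicator (- S) x"
    using assms[of x] by (cases "x \<in> S") simp_all
qed (auto intro: integrable_measure_pmf_finite)

section \<open>Runs of dual policy iteration\<close>

lemma task_update_inside:
  assumes "task_update U \<gamma> \<gamma>h h r f ph pold pmid os q" "x \<in> inv_set \<gamma>h h f ph"
  shows "seq_update (invariant_actions U (safety_value \<gamma>h h f ph) f x)
    (lookahead \<gamma> r f (value_fn \<gamma> r f pold) x) os (pmid x) (q x)"
  using assms unfolding task_update_def by presburger

lemma task_update_outside:
  assumes "task_update U \<gamma> \<gamma>h h r f ph pold pmid os q" "x \<notin> inv_set \<gamma>h h f ph"
  shows "q x = pmid x"
  using assms unfolding task_update_def by presburger

locale dual_policy_iteration =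
  fixes U :: "'i::finite \<Rightarrow> 'a set" and \<gamma> \<gamma>h :: real and h :: "'x::finite \<Rightarrow> real"
    and r :: "'x \<Rightarrow> ('i \<Rightarrow> 'a) \<Rightarrow> real" and f :: "'x \<Rightarrow> ('i \<Rightarrow> 'a) \<Rightarrow> 'x" and K :: nat
    and ph :: "nat \<Rightarrow> 'x \<Rightarrow> 'i \<Rightarrow> 'a" and phs :: "nat \<Rightarrow> nat \<Rightarrow> 'x \<Rightarrow> 'i \<Rightarrow> 'a"
    and pt :: "nat \<Rightarrow> 'x \<Rightarrow> 'i \<Rightarrow> 'a" and Sc :: "nat \<Rightarrow> 'x set"
    and ordh :: "nat \<Rightarrow> nat \<Rightarrow> 'i list" and ordt :: "nat \<Rightarrow> 'i list"
  assumes finite_U: "\<And>i. finite (U i)"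
    and \<gamma>: "0 < \<gamma>" "\<gamma> < 1" and \<gamma>h: "0 < \<gamma>h" "\<gamma>h < 1"
    and K: "1 \<le> K"
    and run: "dpi_run U \<gamma> \<gamma>h h r f K ph phs pt Sc ordh ordt"
begin

lemma valid_initial: "\<forall>x i. ph 0 x i \<in> U i" "\<forall>x i. pt 0 x i \<in> U i"
  using run unfolding dpi_run_def by auto

lemma phs_0: "phs k 0 = ph k"
  and ph_Suc: "ph (Suc k) = phs k K"
  and safety_step_run: "j < K \<Longrightarrow> safety_step U \<gamma>h h f (ordh k j) (phs k j) (phs k (Suc j))"
  and ordh_ordering: "j < K \<Longrightarrow> is_ordering (ordh k j)"
  and ordt_ordering: "is_ordering (ordt k)"
  and task_update_run: "task_update U \<gamma> \<gamma>h h r f (ph (Suc k)) (pt k)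
      (\<lambda>x. if x \<in> Sc k then pt k x else ph (Suc k) x) (ordt k) (pt (Suc k))"
  and Sc_Suc: "Sc (Suc k) = inv_set \<gamma>h h f (ph (Suc k))"
  using run unfolding dpi_run_def by blast+

lemma valid_phs:
  assumes "\<forall>x i. ph k x i \<in> U i" "j \<le> K"
  shows "\<forall>x i. phs k j x i \<in> U i"
  using assms(2)
proof (induction j)
  case 0
  with assms(1) show ?case by (simp add: phs_0)
next
  case (Suc j)
  then show ?case using safety_step_valid[OF safety_step_run] by simp
qed

lemma valid_ph_pt: "(\<forall>x i. ph k x i \<in> U i) \<and> (\<forall>x i. pt k x i \<in> U i)"
proof (induction k)
  case 0
  then show ?case using valid_initial by simp
next
  case (Suc k)
  then have ph: "\<forall>x i. ph (Suc k) x i \<in> U i" using valid_phs[of k K] by (simp add: ph_Suc)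
  let ?pmid = "\<lambda>x. if x \<in> Sc k then pt k x else ph (Suc k) x"
  have "\<forall>i. pt (Suc k) x i \<in> U i" for x
  proof (cases "x \<in> inv_set \<gamma>h h f (ph (Suc k))")
    case True
    from task_update_inside[OF task_update_run this] show ?thesis
      by (rule task_sweep_valid) (use Suc ph in simp)
  next
    case False
    with Suc ph show ?thesis by (simp add: task_update_outside[OF task_update_run])
  qed
  with ph show ?case by blast
qed

text \<open>All safety steps of the run as one sequence; consecutive outer iterations fit together
  because \<open>phs k K = ph (Suc k) = phs (Suc k) 0\<close>.\<close>

definition safety_iterate :: "nat \<Rightarrow> 'x \<Rightarrow> 'i \<Rightarrow> 'a" where
  "safety_iterate m = phs (m div K) (m mod K)"

lemma phs_eq_safety_iterate:
  assumes "j \<le> K"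
  shows "phs k j = safety_iterate (k * K + j)"
proof (cases "j = K")
  case True
  have "Suc k * K div K = Suc k" "Suc k * K mod K = 0" using K by simp_all
  with True show ?thesis by (simp add: safety_iterate_def add.commute phs_0 ph_Suc)
next
  case False
  with assms have "(k * K + j) div K = k" "(k * K + j) mod K = j" by simp_all
  then show ?thesis by (simp add: safety_iterate_def)
qed

lemma safety_iterate_step:
  "safety_step U \<gamma>h h f (ordh (m div K) (m mod K)) (safety_iterate m) (safety_iterate (Suc m))"
proof -
  have j: "m mod K < K" using K by simp
  have "Suc m = m div K * K + Suc (m mod K)" by simp
  then have "safety_iterate (Suc m) = phs (m div K) (Suc (m mod K))"
    using phs_eq_safety_iterate[of "Suc (m mod K)" "m div K"] j by simp
  with safety_step_run[OF j] show ?thesis by (simp add: safety_iterate_def)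
qed

lemma safety_limit:
  obtains M \<pi>h where "\<And>k j. M \<le> k \<Longrightarrow> j \<le> K \<Longrightarrow> phs k j = \<pi>h"
proof -
  have "\<forall>x i. safety_iterate m x i \<in> U i" for m
    unfolding safety_iterate_def using valid_phs valid_ph_pt K by simp
  then have "\<exists>M. \<forall>n\<ge>M. safety_iterate n = safety_iterate M"
    using safety_iterate_step
    by (intro safety_iteration_stabilises[where U = U and h = h and f = f, OF \<gamma>h finite_U]) blast+
  then obtain M where M: "\<And>n. M \<le> n \<Longrightarrow> safety_iterate n = safety_iterate M" by blast
  have "phs k j = safety_iterate M" if "M \<le> k" "j \<le> K" for k j
  proof -
    have "k \<le> k * K" using K by simp
    with that(1) have "M \<le> k * K + j" by linarith
    from phs_eq_safety_iterate[OF that(2), of k] M[OF this] show ?thesis by simp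
  qed
  then show thesis by (rule that)
qed

end

locale dual_policy_iteration_safety_limit = dual_policy_iteration +
  fixes \<pi>h and M :: nat
  assumes safety_stable: "\<And>k j. M \<le> k \<Longrightarrow> j \<le> K \<Longrightarrow> phs k j = \<pi>h"
begin

lemma ph_stable: "M \<le> k \<Longrightarrow> ph k = \<pi>h"
  using safety_stable[of k 0] by (simp add: phs_0)

lemma valid_safety_limit: "\<forall>x i. \<pi>h x i \<in> U i"
  using valid_ph_pt[of M] ph_stable by simp

lemma Sc_stable: "Suc M \<le> k \<Longrightarrow> Sc k = inv_set \<gamma>h h f \<pi>h"
  by (cases k) (simp_all add: Sc_Suc ph_stable)

lemma safety_limit_nash:
  assumes "v \<in> U i"
  shows "safety_value \<gamma>h h f \<pi>h (f x ((\<pi>h x)(i := v))) \<le> safety_value \<gamma>h h f \<pi>h (f x (\<pi>h x))"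
proof (rule safety_step_fixpoint[OF _ valid_safety_limit _ assms])
  have "0 < K" using K by simp
  from safety_step_run[OF this, of M] show "safety_step U \<gamma>h h f (ordh M 0) \<pi>h \<pi>h"
    using K by (simp add: safety_stable)
  show "i \<in> set (ordh M 0)" using ordh_ordering[of 0 M] K by (simp add: is_ordering_def)
qed

lemma task_sweep_stable:
  assumes "Suc M \<le> k" "x \<in> inv_set \<gamma>h h f \<pi>h"
  shows "seq_update (invariant_actions U (safety_value \<gamma>h h f \<pi>h) f x)
    (lookahead \<gamma> r f (value_fn \<gamma> r f (pt k)) x) (ordt k) (pt k x) (pt (Suc k) x)"
proof -
  have "ph (Suc k) = \<pi>h" using assms(1) by (simp add: ph_stable)
  with task_update_inside[OF task_update_run[of k]] assms show ?thesis
    by (simp add: Sc_stable)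
qed

lemma task_invariant_stable:
  assumes "M \<le> k" "x \<in> inv_set \<gamma>h h f \<pi>h"
  shows "0 \<le> safety_value \<gamma>h h f \<pi>h (f x (pt (Suc k) x))"
proof -
  have "ph (Suc k) = \<pi>h" using assms(1) by (simp add: ph_stable)
  with task_update_inside[OF task_update_run[of k]] assms(2)
  have "seq_update (invariant_actions U (safety_value \<gamma>h h f \<pi>h) f x)
      (lookahead \<gamma> r f (value_fn \<gamma> r f (pt k)) x) (ordt k)
      (if x \<in> Sc k then pt k x else ph (Suc k) x) (pt (Suc k) x)" by simp
  moreover have "ordt k \<noteq> []" using ordt_ordering[of k] by (auto simp: is_ordering_def)
  ultimately show ?thesis by (rule task_sweep_invariant)
qed

lemma task_outside_stable:
  assumes "Suc M \<le> k" "x \<notin> inv_set \<gamma>h h f \<pi>h"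
  shows "pt (Suc k) x = \<pi>h x"
proof -
  have "ph (Suc k) = \<pi>h" using assms(1) by (simp add: ph_stable)
  with task_update_outside[OF task_update_run[of k]] assms show ?thesis
    by (simp add: Sc_stable)
qed

lemma task_limit:
  obtains N \<pi>s where "Suc M \<le> N" "\<And>k. N \<le> k \<Longrightarrow> pt k = \<pi>s"
proof -
  let ?Vh = "safety_value \<gamma>h h f \<pi>h"
  have "\<exists>N\<ge>Suc M. \<forall>n\<ge>N. \<forall>x. 0 \<le> ?Vh x \<longrightarrow> pt n x = pt N x"
  proof (rule task_iteration_stabilises[where U = U and W = ?Vh, OF \<gamma> finite_U])
    show "\<forall>x i. pt n x i \<in> U i" for n using valid_ph_pt by blast
    fix n x assume "Suc M \<le> n" "0 \<le> ?Vh x"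
    then show "0 \<le> ?Vh (f x (pt n x))"
      using task_invariant_stable[of "n - 1" x] by (simp add: inv_set_def)
    show "\<exists>os. seq_update (invariant_actions U ?Vh f x)
        (lookahead \<gamma> r f (value_fn \<gamma> r f (pt n)) x) os (pt n x) (pt (Suc n) x)"
      using task_sweep_stable[of n x] \<open>Suc M \<le> n\<close> \<open>0 \<le> ?Vh x\<close> by (auto simp: inv_set_def)
  qed
  then obtain N where N: "Suc M \<le> N" "\<forall>n\<ge>N. \<forall>x. 0 \<le> ?Vh x \<longrightarrow> pt n x = pt N x"
    by (elim exE conjE)
  have "pt k = pt (Suc N)" if "Suc N \<le> k" for k
  proof
    fix x
    show "pt k x = pt (Suc N) x"
    proof (cases "x \<in> inv_set \<gamma>h h f \<pi>h")
      case True
      with N(2)[rule_format, of k x] N(2)[rule_format, of "Suc N" x] that show ?thesis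
        by (simp add: inv_set_def)
    next
      case False
      from that obtain k' where "k = Suc k'" "N \<le> k'" by (cases k) auto
      with False N(1) task_outside_stable[of k' x] task_outside_stable[of N x] show ?thesis by simp
    qed
  qed
  moreover have "Suc M \<le> Suc N" using N(1) by simp
  ultimately show thesis using that by blast
qed

end

locale dual_policy_iteration_limit = dual_policy_iteration_safety_limit +
  fixes \<pi>s and N :: nat
  assumes N: "Suc M \<le> N" and task_stable: "\<And>k. N \<le> k \<Longrightarrow> pt k = \<pi>s"
begin

lemma valid_task_limit: "\<forall>x i. \<pi>s x i \<in> U i"
  using valid_ph_pt[of N] task_stable[of N] by simp

lemma task_limit_outside: "x \<notin> inv_set \<gamma>h h f \<pi>h \<Longrightarrow> \<pi>s x = \<pi>h x"
  using task_outside_stable[of N x] task_stable[of "Suc N"] N by simp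

lemma task_limit_invariant: "x \<in> inv_set \<gamma>h h f \<pi>h \<Longrightarrow> 0 \<le> safety_value \<gamma>h h f \<pi>h (f x (\<pi>s x))"
  using task_invariant_stable[of N x] task_stable[of "Suc N"] N by simp

lemma task_limit_nash:
  assumes "x \<in> inv_set \<gamma>h h f \<pi>h" "v \<in> U i" "0 \<le> safety_value \<gamma>h h f \<pi>h (f x ((\<pi>s x)(i := v)))"
  shows "lookahead \<gamma> r f (value_fn \<gamma> r f \<pi>s) x ((\<pi>s x)(i := v))
    \<le> lookahead \<gamma> r f (value_fn \<gamma> r f \<pi>s) x (\<pi>s x)"
proof -
  have sweep: "seq_update (invariant_actions U (safety_value \<gamma>h h f \<pi>h) f x)
      (lookahead \<gamma> r f (value_fn \<gamma> r f \<pi>s) x) (ordt N) (\<pi>s x) (\<pi>s x)"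
    using task_sweep_stable[OF N assms(1)] task_stable[of N] task_stable[of "Suc N"] by simp
  have "i \<in> set (ordt N)" using ordt_ordering[of N] by (simp add: is_ordering_def)
  from task_sweep_fixpoint[where U = U and W = "safety_value \<gamma>h h f \<pi>h" and f = f and x = x
      and \<gamma> = \<gamma> and r = r and V = "value_fn \<gamma> r f \<pi>s", OF sweep _ _ this assms(2,3)]
    valid_task_limit task_limit_invariant[OF assms(1)]
  show ?thesis by blast
qed

lemma safety_nash_equilibrium:
  "\<forall>y. \<pi>i y \<in> U i \<Longrightarrow> safety_value \<gamma>h h f (deviate \<pi>h i \<pi>i) x \<le> safety_value \<gamma>h h f \<pi>h x"
  by (rule safety_deviation_le[where U = U and ph = \<pi>h, OF \<gamma>h safety_limit_nash]) auto

lemma task_generalized_nash: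
  assumes "\<forall>y. \<pi>i y \<in> U i"
    and "\<forall>y\<in>inv_set \<gamma>h h f \<pi>h. 0 \<le> safety_value \<gamma>h h f \<pi>h (f y ((\<pi>s y)(i := \<pi>i y)))"
    and "x \<in> inv_set \<gamma>h h f \<pi>h"
  shows "value_fn \<gamma> r f (deviate \<pi>s i \<pi>i) x \<le> value_fn \<gamma> r f \<pi>s x"
  by (rule task_deviation_le[OF \<gamma>, where W = "safety_value \<gamma>h h f \<pi>h" and U = U])
    (use task_limit_nash assms in \<open>auto simp: inv_set_def\<close>)

lemma twofold_generalized_nash:
  assumes "\<forall>y. \<pi>i y \<in> U i"
    and "\<forall>y\<in>inv_set \<gamma>h h f \<pi>h. 0 \<le> safety_value \<gamma>h h f \<pi>h (f y ((\<pi>s y)(i := \<pi>i y)))"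
  shows "twofold_J \<gamma> \<gamma>h h r f (inv_set \<gamma>h h f \<pi>h) d (deviate \<pi>s i \<pi>i)
    \<le> twofold_J \<gamma> \<gamma>h h r f (inv_set \<gamma>h h f \<pi>h) d \<pi>s"
proof (rule twofold_J_mono)
  show "value_fn \<gamma> r f (deviate \<pi>s i \<pi>i) x \<le> value_fn \<gamma> r f \<pi>s x"
    if "x \<in> inv_set \<gamma>h h f \<pi>h" for x
    using task_generalized_nash[OF assms that] .
  show "safety_value \<gamma>h h f (deviate \<pi>s i \<pi>i) x \<le> safety_value \<gamma>h h f \<pi>s x" for x
  proof -
    have "safety_value \<gamma>h h f (deviate \<pi>s i \<pi>i) x \<le> safety_value \<gamma>h h f \<pi>h x"
      using safety_deviation_le[where U = U and ph = \<pi>h,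
          OF \<gamma>h safety_limit_nash assms(1) task_limit_outside]
      by blast
    also have "\<dots> \<le> safety_value \<gamma>h h f \<pi>s x"
      using safety_value_ge_of_invariant[where ph = \<pi>h and p = \<pi>s,
          OF \<gamma>h task_limit_outside task_limit_invariant]
      by blast
    finally show ?thesis .
  qed
qed

end

theorem theorem2:
  fixes U :: "'i::finite \<Rightarrow> 'a set"
    and f :: "'x::finite \<Rightarrow> ('i \<Rightarrow> 'a) \<Rightarrow> 'x"
    and r :: "'x \<Rightarrow> ('i \<Rightarrow> 'a) \<Rightarrow> real"
    and h :: "'x \<Rightarrow> real"
    and \<gamma> \<gamma>h :: real and K :: nat
    and ph :: "nat \<Rightarrow> 'x \<Rightarrow> 'i \<Rightarrow> 'a" and phs :: "nat \<Rightarrow> nat \<Rightarrow> 'x \<Rightarrow> 'i \<Rightarrow> 'a"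
    and pt :: "nat \<Rightarrow> 'x \<Rightarrow> 'i \<Rightarrow> 'a" and Sc :: "nat \<Rightarrow> 'x set"
    and ordh :: "nat \<Rightarrow> nat \<Rightarrow> 'i list" and ordt :: "nat \<Rightarrow> 'i list"
  assumes finU: "\<And>i. finite (U i)"
    and \<gamma>: "0 < \<gamma>" "\<gamma> < 1" and \<gamma>h: "0 < \<gamma>h" "\<gamma>h < 1"
    and K: "K \<ge> 1"
    and run: "dpi_run U \<gamma> \<gamma>h h r f K ph phs pt Sc ordh ordt"
  shows "\<exists>\<pi>h\<pi> \<pi>s. (\<exists>N. \<forall>k\<ge>N. ph k = \<pi>h\<pi> \<and> (\<forall>j\<le>K. phs k j = \<pi>h\<pi>) \<and> pt k = \<pi>s)
    \<and> (let S = inv_set \<gamma>h h f \<pi>h\<pi> in S \<noteq> {} \<longrightarrow>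
        \<comment> \<open>(a)\<close>
        (\<forall>i \<pi>i. (\<forall>y. \<pi>i y \<in> U i) \<longrightarrow>
           (\<forall>x. safety_value \<gamma>h h f (deviate \<pi>h\<pi> i \<pi>i) x \<le> safety_value \<gamma>h h f \<pi>h\<pi> x))
        \<comment> \<open>(b)\<close>
      \<and> (\<forall>x. x \<notin> S \<longrightarrow> \<pi>s x = \<pi>h\<pi> x)
      \<and> (\<forall>x\<in>S. safety_value \<gamma>h h f \<pi>h\<pi> (f x (\<pi>s x)) \<ge> 0)
        \<comment> \<open>(c)\<close>
      \<and> (\<forall>i \<pi>i. (\<forall>y. \<pi>i y \<in> U i) \<longrightarrow>
           (\<forall>y\<in>S. safety_value \<gamma>h h f \<pi>h\<pi> (f y ((\<pi>s y)(i := \<pi>i y))) \<ge> 0) \<longrightarrow>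
           (\<forall>x\<in>S. value_fn \<gamma> r f (deviate \<pi>s i \<pi>i) x \<le> value_fn \<gamma> r f \<pi>s x))
        \<comment> \<open>(d)\<close>
      \<and> (\<forall>d i \<pi>i. (\<forall>y. \<pi>i y \<in> U i) \<longrightarrow>
           (\<forall>y\<in>S. safety_value \<gamma>h h f \<pi>h\<pi> (f y ((\<pi>s y)(i := \<pi>i y))) \<ge> 0) \<longrightarrow>
           twofold_J \<gamma> \<gamma>h h r f S d (deviate \<pi>s i \<pi>i) \<le> twofold_J \<gamma> \<gamma>h h r f S d \<pi>s))"
proof -
  interpret dual_policy_iteration U \<gamma> \<gamma>h h r f K ph phs pt Sc ordh ordt
    using assms by unfold_locales
  obtain M \<pi>h where safety: "\<And>k j. M \<le> k \<Longrightarrow> j \<le> K \<Longrightarrow> phs k j = \<pi>h"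
    by (rule safety_limit) blast
  interpret dual_policy_iteration_safety_limit U \<gamma> \<gamma>h h r f K ph phs pt Sc ordh ordt \<pi>h M
    using safety by unfold_locales
  obtain N \<pi>s where task: "Suc M \<le> N" "\<And>k. N \<le> k \<Longrightarrow> pt k = \<pi>s"
    by (rule task_limit) blast
  interpret dual_policy_iteration_limit U \<gamma> \<gamma>h h r f K ph phs pt Sc ordh ordt \<pi>h M \<pi>s N
    using task by unfold_locales
  have stable: "\<forall>k\<ge>N. ph k = \<pi>h \<and> (\<forall>j\<le>K. phs k j = \<pi>h) \<and> pt k = \<pi>s"
    using N by (simp add: ph_stable safety_stable task_stable)
  show ?thesis
    unfolding Let_def
    by (rule exI[of _ \<pi>h], rule exI[of _ \<pi>s])
      (use stable safety_nash_equilibrium task_limit_outside task_limit_invariant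
        task_generalized_nash twofold_generalized_nash in blast)
qed

end
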